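(* Let $a=\begin{pmatrix}1&0\\0&-1\end{pmatrix}$, $e_{12}=\begin{pmatrix}0&1\\0&0\end{pmatrix}$, $e_{21}=\begin{pmatrix}0&0\\1&0\end{pmatrix}$, and $q\in\mathcal{S}(\mathbb{R},\mathbb{R})$. (i) Suppose $\delta q\in\mathcal{S}(\mathbb{R},\mathbb{R})$ and $\xi(x,\lambda)=\sum_{j\le-1}\xi_j(x)\lambda^j$, with $\xi_j:\mathbb{R}\to\mathfrak{sl}(2,\mathbb{R})$ smooth, satisfying the KdV reality condition for each $x$, with $\lim_{x\to\pm\infty}\xi_j(x)=0$ for $j=-1,-2$, and $$[\xi_{-1},a]=(\delta q)e_{12},\qquad (\xi_{-1})_x+[e_{21}+qe_{12},\xi_{-1}]=[\xi_{-2},a].$$ Writing $C_{-2}$ for the $(2,1)$-entry of $\xi_{-2}$, one has $\delta q=-2(C_{-2})_x$. Hence the 2-form $\beta_{-1}(\delta_1q,\delta_2q)=\int_{-\infty}^\infty C_{-2}\,\delta_2q\,dx$ (with $C_{-2}$ associated to $\delta_1q$) equals $\int_{-\infty}^\infty(J_{-1}^{-1}\delta_1q)\,\delta_2q\,dx$ with $J_{-1}(v)=-2v_x$. (ii) Suppose $\delta q\in\mathcal{S}(\mathbb{R},\mathbb{R})$ and $\xi_0=\begin{pmatrix}A&B\\C&-A\end{pmatrix}:\mathbb{R}\to\mathfrak{sl}(2,\mathbb{R})$ is of Schwartz class with $$(\delta q)e_{12}=-(\xi_0)_x+[\xi_0,e_{21}+qe_{12}].$$ Then $\delta q=\tfrac12C_{xxx}-2qC_x-q_xC$.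 Hence the 2-form $\beta_1(\delta_1q,\delta_2q)=\int_{-\infty}^\infty C\,\delta_2q\,dx$ (with $C$ associated to $\delta_1q$) equals $\int_{-\infty}^\infty(J_1^{-1}\delta_1q)\,\delta_2q\,dx$ with $J_1(v)=\tfrac12v_{xxx}-2qv_x-q_xv$.
   Context: The KdV reality condition for a series $\xi(\lambda)$: $\overline{\xi(\bar\lambda)}=\xi(\lambda)$ and $\phi(\lambda)^{-1}\xi(\lambda)\phi(\lambda)=\phi(-\lambda)^{-1}\xi(-\lambda)\phi(-\lambda)$, $\phi(\lambda)=\begin{pmatrix}1&\lambda\\0&1\end{pmatrix}$. The forms $\beta_{-1}$, $\beta_1$ are the restrictions, to the KdV phase space $\{d_x+a\lambda+e_{21}+qe_{12}\}$ resp. $\{d_x+e_{21}+qe_{12}\}$, of the Kostant–Kirillov symplectic forms of coadjoint orbits of centrally extended loop algebras (with pairings $\langle\cdot,\cdot\rangle_{\Lambda_{-1}}$, $\langle\cdot,\cdot\rangle_{\Lambda_1}$); the displayed integral formulas give these forms, where tangent vectors $\delta q$ are represented via $\xi$ as in (i) resp. $\xi_0$ as in (ii). The KdV equation is $q_t=\frac14(q_{xxx}-6qq_x)$. *)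

theory Defs
  imports "HOL-Analysis.Analysis"
begin

text \<open>2x2 real matrices; M $ i $ j is the (i,j) entry (row i, column j).\<close>

definition mat2 :: "real \<Rightarrow> real \<Rightarrow> real \<Rightarrow> real \<Rightarrow> real^2^2" where
  "mat2 p r s t = vector [vector [p, r], vector [s, t]]"

definition amat :: "real^2^2" where "amat = mat2 1 0 0 (-1)"
definition e12 :: "real^2^2" where "e12 = mat2 0 1 0 0"
definition e21 :: "real^2^2" where "e21 = mat2 0 0 1 0"

definition bracket :: "real^2^2 \<Rightarrow> real^2^2 \<Rightarrow> real^2^2" where
  "bracket X Y = X ** Y - Y ** X"

definition vderiv :: "(real \<Rightarrow> 'a::real_normed_vector) \<Rightarrow> real \<Rightarrow> 'a" where
  "vderiv f = (\<lambda>x. vector_derivative f (at x))"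

definition smooth_fun :: "(real \<Rightarrow> 'a::real_normed_vector) \<Rightarrow> bool" where
  "smooth_fun f \<longleftrightarrow> (\<forall>n x. ((vderiv ^^ n) f) differentiable (at x))"

definition schwartz :: "(real \<Rightarrow> 'a::real_normed_vector) \<Rightarrow> bool" where
  "schwartz f \<longleftrightarrow> smooth_fun f \<and>
     (\<forall>m n. bounded (range (\<lambda>x. (\<bar>x\<bar> ^ m) *\<^sub>R (vderiv ^^ n) f x)))"

text \<open>KdV reality condition for a formal series xi(lambda) = sum_j c j lambda^j
  with real sl(2)-coefficients (so conj(xi(conj lambda)) = xi(lambda) holds automatically).
  With phi(lambda) = I + lambda e12, phi(lambda)^-1 = I - lambda e12, the coefficient of
  lambda^k in phi(lambda)^-1 xi(lambda) phi(lambda) is conj_coeff c k; the coefficient of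
  lambda^k in phi(-lambda)^-1 xi(-lambda) phi(-lambda) is (-1)^k conj_coeff c k.\<close>
definition conj_coeff :: "(int \<Rightarrow> real^2^2) \<Rightarrow> int \<Rightarrow> real^2^2" where
  "conj_coeff c k = c k + (c (k - 1) ** e12 - e12 ** c (k - 1)) - e12 ** c (k - 2) ** e12"

definition kdv_reality :: "(int \<Rightarrow> real^2^2) \<Rightarrow> bool" where
  "kdv_reality c \<longleftrightarrow>
     (\<forall>k. conj_coeff c k = (if even k then 1 else -1) *\<^sub>R conj_coeff c k)"

definition Jm1 :: "(real \<Rightarrow> real) \<Rightarrow> real \<Rightarrow> real" where
  "Jm1 v = (\<lambda>x. -2 * vderiv v x)"

definition J1 :: "(real \<Rightarrow> real) \<Rightarrow> (real \<Rightarrow> real) \<Rightarrow> real \<Rightarrow> real" where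
  "J1 q v = (\<lambda>x. (1/2) * (vderiv ^^ 3) v x - 2 * q x * vderiv v x - vderiv q x * v x)"

end

theory Submission
  imports Defs
begin

text \<open>Write each sl(2)-valued function as [[A, B], [C, -A]]. Both identities are read
  off entrywise from the matrix equations.
  In (i), [xi_-1, a] = dq e12 makes xi_-1 upper triangular with dq = -2 B_-1; the (2,1)
  and (1,1) entries of the second equation then give A_-1 = C_-2 and A_-1' = B_-1,
  so dq = -2 C_-2'.
  In (ii), the (2,1), (1,1) and (1,2) entries give A = -C'/2, B = A' + qC and
  dq = -B' + 2qA; substituting yields dq = J_1 C.\<close>

lemma vderiv_eqI: "(f has_vector_derivative d) (at x) \<Longrightarrow> vderiv f x = d"
  unfolding vderiv_def by (rule vector_derivative_at)

lemma has_vector_derivative_vderiv: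
  "f differentiable (at x) \<Longrightarrow> (f has_vector_derivative vderiv f x) (at x)"
  unfolding vderiv_def by (rule vector_derivative_works[THEN iffD1])

lemma vderiv_real_eqI: "(f has_real_derivative d) (at x) \<Longrightarrow> vderiv f x = d"
  by (rule vderiv_eqI) (simp add: has_real_derivative_iff_has_vector_derivative)

lemma has_real_derivative_vderiv:
  fixes f :: "real \<Rightarrow> real"
  shows "f differentiable (at x) \<Longrightarrow> (f has_real_derivative vderiv f x) (at x)"
  by (simp add: has_real_derivative_iff_has_vector_derivative has_vector_derivative_vderiv)

lemma vderiv_bounded_linear:
  assumes "bounded_linear L" "f differentiable (at x)"
  shows "vderiv (\<lambda>y. L (f y)) x = L (vderiv f x)"
  by (rule vderiv_eqI)
    (rule bounded_linear.has_vector_derivative[OF assms(1) has_vector_derivative_vderiv[OF assms(2)]])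

lemma smooth_fun_differentiable: "smooth_fun f \<Longrightarrow> (vderiv ^^ n) f differentiable (at x)"
  unfolding smooth_fun_def by blast

lemma smooth_fun_imp_differentiable: "smooth_fun f \<Longrightarrow> f differentiable (at x)"
  using smooth_fun_differentiable[where n = 0] by simp

lemma smooth_fun_vderiv: "smooth_fun f \<Longrightarrow> smooth_fun (vderiv f)"
  unfolding smooth_fun_def by (metis funpow_Suc_right comp_apply)

lemma funpow_vderiv_bounded_linear:
  assumes "smooth_fun f" "bounded_linear L"
  shows "(vderiv ^^ n) (\<lambda>y. L (f y)) = (\<lambda>y. L ((vderiv ^^ n) f y))"
proof (induction n)
  case 0
  show ?case by simp
next
  case (Suc n)
  then show ?case
    using vderiv_bounded_linear[OF assms(2) smooth_fun_differentiable[OF assms(1)]] by auto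
qed

lemma smooth_fun_bounded_linear:
  assumes "smooth_fun f" "bounded_linear L"
  shows "smooth_fun (\<lambda>y. L (f y))"
  unfolding smooth_fun_def funpow_vderiv_bounded_linear[OF assms]
  using bounded_linear.has_vector_derivative[OF assms(2)
      has_vector_derivative_vderiv[OF smooth_fun_differentiable[OF assms(1)]]]
  by (blast intro: differentiableI_vector)

lemma bounded_linear_matrix_entry: "bounded_linear (\<lambda>M :: 'a::real_normed_vector^'n^'m. M $ i $ j)"
  by (rule bounded_linear_compose[OF bounded_linear_vec_nth bounded_linear_vec_nth])

lemma vderiv_matrix_entry:
  "f differentiable (at x) \<Longrightarrow> vderiv (\<lambda>y. f y $ i $ j) x = vderiv f x $ i $ j"
  by (rule vderiv_bounded_linear[OF bounded_linear_matrix_entry])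

lemma smooth_fun_matrix_entry: "smooth_fun f \<Longrightarrow> smooth_fun (\<lambda>y. f y $ i $ j)"
  by (rule smooth_fun_bounded_linear[OF _ bounded_linear_matrix_entry])

lemma mat2_nth [simp]:
  "mat2 p r s t $ 1 $ 1 = p" "mat2 p r s t $ 1 $ 2 = r"
  "mat2 p r s t $ 2 $ 1 = s" "mat2 p r s t $ 2 $ 2 = t"
  by (simp_all add: mat2_def)

lemma matrix_eq_2x2_iff:
  "(X :: 'a^2^2) = Y \<longleftrightarrow>
     X $ 1 $ 1 = Y $ 1 $ 1 \<and> X $ 1 $ 2 = Y $ 1 $ 2 \<and> X $ 2 $ 1 = Y $ 2 $ 1 \<and> X $ 2 $ 2 = Y $ 2 $ 2"
  by (auto simp: vec_eq_iff forall_2)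

lemma matrix_mult_2x2_nth:
  "((X :: 'a::semiring_1^2^2) ** Y) $ i $ j = X $ i $ 1 * Y $ 1 $ j + X $ i $ 2 * Y $ 2 $ j"
  by (simp add: matrix_matrix_mult_def sum_2)

lemma trace_2x2: "trace (X :: 'a::semiring_1^2^2) = X $ 1 $ 1 + X $ 2 $ 2"
  by (simp add: trace_def sum_2)

lemma bracket_amat: "bracket X amat = mat2 0 (-2 * X $ 1 $ 2) (2 * X $ 2 $ 1) 0"
  by (simp add: matrix_eq_2x2_iff bracket_def matrix_mult_2x2_nth amat_def)

lemma bracket_e21_e12:
  "bracket (e21 + q *\<^sub>R e12) X =
     mat2 (q * X $ 2 $ 1 - X $ 1 $ 2) (q * (X $ 2 $ 2 - X $ 1 $ 1))
          (X $ 1 $ 1 - X $ 2 $ 2) (X $ 1 $ 2 - q * X $ 2 $ 1)"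
  by (simp add: matrix_eq_2x2_iff bracket_def matrix_mult_2x2_nth e21_def e12_def algebra_simps)

lemma bracket_antisym: "bracket X Y = - bracket Y X"
  by (simp add: bracket_def)

lemma delta_q_eq_Jm1:
  fixes X Y :: "real \<Rightarrow> real^2^2"
  assumes diff: "\<And>x. X differentiable (at x)"
    and trace: "\<And>x. trace (X x) = 0"
    and lowest: "\<And>x. bracket (X x) amat = dq x *\<^sub>R e12"
    and next_lowest: "\<And>x. vderiv X x + bracket (e21 + q x *\<^sub>R e12) (X x) = bracket (Y x) amat"
  shows "dq = Jm1 (\<lambda>x. Y x $ 2 $ 1)"
proof -
  have lower: "X x $ 2 $ 1 = 0" and dq: "dq x = -2 * X x $ 1 $ 2" for x
    using lowest[of x] by (auto simp: bracket_amat matrix_eq_2x2_iff e12_def)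
  have "vderiv X x $ 2 $ 1 = vderiv (\<lambda>y. 0) x" for x
    using vderiv_matrix_entry[OF diff, where i=2 and j=1] lower by simp
  then have "vderiv X x $ 2 $ 1 = 0" for x
    by (simp add: vderiv_eqI)
  then have diag_eq: "X x $ 1 $ 1 = Y x $ 2 $ 1"
    and diag_deriv: "vderiv X x $ 1 $ 1 = X x $ 1 $ 2" for x
    using next_lowest[of x] trace[of x] lower[of x]
    by (auto simp: bracket_amat bracket_e21_e12 matrix_eq_2x2_iff trace_2x2)
  have "vderiv (\<lambda>x. Y x $ 2 $ 1) x = X x $ 1 $ 2" for x
  proof -
    have "(\<lambda>x. Y x $ 2 $ 1) = (\<lambda>x. X x $ 1 $ 1)"
      using diag_eq by simp
    then show ?thesis
      using vderiv_matrix_entry[OF diff, where i=1 and j=1] diag_deriv by simp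
  qed
  then show ?thesis
    by (simp add: Jm1_def fun_eq_iff dq)
qed

lemma delta_q_eq_J1:
  fixes Xi :: "real \<Rightarrow> real^2^2"
  assumes smooth: "smooth_fun Xi"
    and q_diff: "\<And>x. q differentiable (at x)"
    and trace: "\<And>x. trace (Xi x) = 0"
    and eq: "\<And>x. dq x *\<^sub>R e12 = - vderiv Xi x + bracket (Xi x) (e21 + q x *\<^sub>R e12)"
  shows "dq = J1 q (\<lambda>x. Xi x $ 2 $ 1)"
proof -
  define A where "A = (\<lambda>x. Xi x $ 1 $ 1)"
  define B where "B = (\<lambda>x. Xi x $ 1 $ 2)"
  define C where "C = (\<lambda>x. Xi x $ 2 $ 1)"
  have C_smooth: "smooth_fun C"
    unfolding C_def by (rule smooth_fun_matrix_entry[OF smooth])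
  have entry_deriv: "vderiv Xi x $ i $ j = vderiv (\<lambda>y. Xi y $ i $ j) x" for x i j
    using vderiv_matrix_entry[OF smooth_fun_imp_differentiable[OF smooth]] by simp
  have A_eq: "A x = -(1/2) * vderiv C x" and B_eq: "B x = vderiv A x + q x * C x"
    and dq_eq: "dq x = - vderiv B x + 2 * q x * A x" for x
  proof -
    have "Xi x $ 2 $ 2 = - Xi x $ 1 $ 1"
      using trace[of x] by (simp add: trace_2x2)
    then show "A x = -(1/2) * vderiv C x" "B x = vderiv A x + q x * C x"
      "dq x = - vderiv B x + 2 * q x * A x"
      using eq[of x, unfolded bracket_antisym[of "Xi x"] bracket_e21_e12]
      by (auto simp: matrix_eq_2x2_iff e12_def entry_deriv A_def B_def C_def algebra_simps)
  qed
  have C_diff: "C differentiable (at x)" "vderiv C differentiable (at x)"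
    "vderiv (vderiv C) differentiable (at x)" for x
    by (simp_all add: smooth_fun_imp_differentiable smooth_fun_vderiv C_smooth)
  have dA: "vderiv A x = -(1/2) * vderiv (vderiv C) x" for x
    unfolding A_eq[abs_def]
    by (rule vderiv_real_eqI)
      (auto intro!: derivative_eq_intros has_real_derivative_vderiv C_diff)
  have dB: "vderiv B x =
      -(1/2) * vderiv (vderiv (vderiv C)) x + vderiv q x * C x + q x * vderiv C x" for x
    unfolding B_eq[abs_def] dA
    by (rule vderiv_real_eqI)
      (auto intro!: derivative_eq_intros has_real_derivative_vderiv q_diff C_diff)
  show ?thesis
    unfolding C_def[symmetric] fun_eq_iff J1_def dq_eq dB A_eq
    by (simp add: numeral_3_eq_3 algebra_simps)
qed

theorem theorem6p3:
  fixes q :: "real \<Rightarrow> real"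
  assumes q: "schwartz q"
  shows
  "(\<forall>(dq :: real \<Rightarrow> real) (\<xi> :: int \<Rightarrow> real \<Rightarrow> real^2^2).
      schwartz dq \<and>
      (\<forall>j. smooth_fun (\<xi> j)) \<and>
      (\<forall>j x. trace (\<xi> j x) = 0) \<and>
      (\<forall>j. j \<ge> 0 \<longrightarrow> \<xi> j = (\<lambda>x. 0)) \<and>
      (\<forall>x. kdv_reality (\<lambda>j. \<xi> j x)) \<and>
      (\<forall>j \<in> {-1, -2}. (\<xi> j \<longlongrightarrow> 0) at_top \<and> (\<xi> j \<longlongrightarrow> 0) at_bot) \<and>
      (\<forall>x. bracket (\<xi> (-1) x) amat = dq x *\<^sub>R e12) \<and>
      (\<forall>x. vderiv (\<xi> (-1)) x + bracket (e21 + q x *\<^sub>R e12) (\<xi> (-1) x)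
             = bracket (\<xi> (-2) x) amat)
      \<longrightarrow> (let C2 = (\<lambda>x. \<xi> (-2) x $ 2 $ 1) in
            (\<forall>x. dq x = -2 * vderiv C2 x) \<and> dq = Jm1 C2))
   \<and>
   (\<forall>(dq :: real \<Rightarrow> real) (\<xi>0 :: real \<Rightarrow> real^2^2).
      schwartz dq \<and> schwartz \<xi>0 \<and>
      (\<forall>x. trace (\<xi>0 x) = 0) \<and>
      (\<forall>x. dq x *\<^sub>R e12 = - vderiv \<xi>0 x + bracket (\<xi>0 x) (e21 + q x *\<^sub>R e12))
      \<longrightarrow> (let C = (\<lambda>x. \<xi>0 x $ 2 $ 1) in
            (\<forall>x. dq x = (1/2) * (vderiv ^^ 3) C x - 2 * q x * vderiv C x - vderiv q x * C x)
            \<and> dq = J1 q C))"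
proof (intro conjI allI impI, goal_cases)
  case (1 dq \<xi>)
  then have "dq = Jm1 (\<lambda>x. \<xi> (-2) x $ 2 $ 1)"
    by (intro delta_q_eq_Jm1[where X = "\<xi> (-1)" and q = q])
      (auto intro: smooth_fun_imp_differentiable)
  then show ?case
    by (simp add: Jm1_def)
next
  case (2 dq \<xi>0)
  have "\<And>x. q differentiable (at x)"
    using q by (auto simp: schwartz_def intro: smooth_fun_imp_differentiable)
  then have "dq = J1 q (\<lambda>x. \<xi>0 x $ 2 $ 1)"
    using 2 by (intro delta_q_eq_J1) (auto simp: schwartz_def)
  then show ?case
    by (simp add: J1_def)
qed

end
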